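(* Let $H_5$ be the 3-graph with vertex set $[6]$ and edges $142,143,145,146,251,253,254,256,361,362,364,365$. Then $\lambda(H_5)\le\frac{1}{16}$.
   Context: For a 3-uniform hypergraph $H$ on vertices $1,\dots,m$, its Lagrangian is $\lambda(H)=\max\{\sum_{ijk\in E(H)}x_ix_jx_k : x\in[0,1]^m,\ x_1+\dots+x_m=1\}$. *)

theory Defs
  imports Complex_Main
begin

text \<open>The Lagrangian is the maximum over the
standard simplex of the edge polynomial; we take the supremum (which is attained
by compactness, so it equals the maximum).\<close>

definition simplex :: "nat \<Rightarrow> (nat \<Rightarrow> real) set" where
  "simplex m = {x. (\<forall>i\<in>{1..m}. 0 \<le> x i \<and> x i \<le> 1) \<and> (\<Sum>i=1..m. x i) = 1}"

definition edge_poly :: "nat set set \<Rightarrow> (nat \<Rightarrow> real) \<Rightarrow> real" where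
  "edge_poly E x = (\<Sum>e\<in>E. \<Prod>i\<in>e. x i)"

definition lagrangian :: "nat \<Rightarrow> nat set set \<Rightarrow> real" where
  "lagrangian m E = (SUP x\<in>simplex m. edge_poly E x)"

definition H5 :: "nat set set" where
  "H5 = {{1,4,2},{1,4,3},{1,4,5},{1,4,6},{2,5,1},{2,5,3},{2,5,4},{2,5,6},
         {3,6,1},{3,6,2},{3,6,4},{3,6,5}}"

end

theory Submission
  imports Defs
begin

text \<open>The vertices of \<open>H5\<close> split into the pairs \<open>{1,4}\<close>, \<open>{2,5}\<close>, \<open>{3,6}\<close>, and the edges
are exactly the triples formed by one pair and one vertex outside it. Writing \<open>s\<close> for the
weight of a pair \<open>{i,j}\<close>, its edges contribute \<open>x\<^sub>i x\<^sub>j (1 - s) \<le> s\<^sup>2 (1 - s) / 4 \<le> s / 16\<close>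
by AM-GM twice, and the weights of the three pairs add up to 1.\<close>

lemma simplex_nonempty:
  assumes "1 \<le> m"
  shows "simplex m \<noteq> {}"
proof -
  have "(\<lambda>i. if i = 1 then 1 else 0) \<in> simplex m"
    using assms unfolding simplex_def by (simp add: sum.If_cases)
  then show ?thesis by blast
qed

lemma lagrangian_le:
  assumes "1 \<le> m" and "\<And>x. x \<in> simplex m \<Longrightarrow> edge_poly E x \<le> c"
  shows "lagrangian m E \<le> c"
  unfolding lagrangian_def using assms simplex_nonempty by (blast intro: cSUP_least)

lemma mult_mult_one_minus_le:
  fixes a b :: real
  assumes "0 \<le> a" "0 \<le> b" "a + b \<le> 1"
  shows "a * b * (1 - (a + b)) \<le> (a + b) / 16"
proof -
  define s where "s = a + b"
  have "0 \<le> (a - b)\<^sup>2" "0 \<le> (2 * s - 1)\<^sup>2" by simp_all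
  then have ab: "a * b \<le> s\<^sup>2 / 4" and s: "s * (1 - s) \<le> 1 / 4"
    unfolding s_def by (simp_all add: power2_eq_square algebra_simps)
  have "a * b * (1 - s) \<le> s\<^sup>2 / 4 * (1 - s)"
    using ab assms by (intro mult_right_mono) (simp_all add: s_def)
  also have "\<dots> = s * (s * (1 - s)) / 4"
    by (simp add: power2_eq_square)
  also have "\<dots> \<le> s * (1 / 4) / 4"
    using s assms by (intro divide_right_mono mult_left_mono) (simp_all add: s_def)
  finally show ?thesis by (simp add: s_def)
qed

lemma edge_poly_H5:
  "edge_poly H5 x = x 1 * x 4 * (x 2 + x 3 + x 5 + x 6) + x 2 * x 5 * (x 1 + x 3 + x 4 + x 6)
     + x 3 * x 6 * (x 1 + x 2 + x 4 + x 5)"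
  unfolding edge_poly_def H5_def
  \<comment> \<open>\<open>code_simp\<close> discharges the distinctness side conditions on the listed edges\<close>
  by (subst sum.insert, simp, code_simp)+ (simp add: algebra_simps)

theorem lemma3p3:
  shows "lagrangian 6 H5 \<le> 1 / 16"
proof (rule lagrangian_le)
  fix x assume "x \<in> simplex 6"
  then have nonneg: "\<And>i. i \<in> {1..6} \<Longrightarrow> 0 \<le> x i"
    and total: "x 1 + x 2 + x 3 + x 4 + x 5 + x 6 = 1"
    by (auto simp: simplex_def numeral_eq_Suc)
  have "x 2 + x 3 + x 5 + x 6 = 1 - (x 1 + x 4)"
    "x 1 + x 3 + x 4 + x 6 = 1 - (x 2 + x 5)"
    "x 1 + x 2 + x 4 + x 5 = 1 - (x 3 + x 6)"
    using total by linarith+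
  then have "edge_poly H5 x = x 1 * x 4 * (1 - (x 1 + x 4)) + x 2 * x 5 * (1 - (x 2 + x 5))
      + x 3 * x 6 * (1 - (x 3 + x 6))"
    by (simp only: edge_poly_H5)
  also have "\<dots> \<le> (x 1 + x 4) / 16 + (x 2 + x 5) / 16 + (x 3 + x 6) / 16"
    using nonneg[of 1] nonneg[of 2] nonneg[of 3] nonneg[of 4] nonneg[of 5] nonneg[of 6] total
    by (intro add_mono mult_mult_one_minus_le) simp_all
  also have "\<dots> = 1 / 16"
    using total by argo
  finally show "edge_poly H5 x \<le> 1 / 16" .
qed simp

end
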